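(* Let $f=\frac1n\sum_{i=1}^n f_i$ with $f_i:\mathbb{R}^d\to\mathbb{R}$ differentiable and let $x^*$ be the minimizer of $f$. Let $\mathcal G$ be a partition of $[n]$ into sets of size $\tau$, and let $S$ be a random set with $\Pr(S=C)=p_C>0$ for $C\in\mathcal G$, $\sum_{C\in\mathcal G}p_C=1$. Assume that for every $C\in\mathcal G$ the function $f_C=\frac{1}{|C|}\sum_{i\in C}f_i$ is $L_C$-smooth and $\mu$-strongly convex ($\mu>0$). Let $\{x^k,\mathbf J^k\}$ be the iterates of minibatch SAGA with sampling $S$ and stepsize $\alpha$, and let $S$ also denote a copy of the sampling independent of the iterates. Define the stochastic Lyapunov function $$\Psi_S^k=\|x^k-x^*\|_2^2+2\sigma_S\alpha\Big\|\tfrac1n\mathbf J^ke-\nabla f_{S,\mathbf J^k}(x^* )\Big\|_2^2,\qquad \sigma_S=\frac{n}{4\tau L_S}.$$ If $\alpha\le\min_{C\in\mathcal G}\frac{p_C}{\mu+4L_C\tau/n}$, then $\mathbb{E}[\Psi_S^k]\le(1-\mu\alpha)^k\,\mathbb{E}[\Psi_S^0]$. Consequently, if $\alpha$ equals this upper bound, then $k\ge\max_{C\in\mathcal G}\left\{\frac1{p_C}+\frac{4L_C}{\mu}\frac{\tau}{np_C}\right\}\log\frac1\epsilon$ implies $\mathbb{E}[\Psi_S^k]\le\epsilon\,\mathbb{E}[\Psi_S^0]$.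
   Context: $e\in\mathbb{R}^n$ is the all-ones vector, $\mathbf J_{:i}$ the $i$-th column of $\mathbf J\in\mathbb{R}^{d\times n}$. For $C\in\mathcal G$ and $\mathbf J\in\mathbb{R}^{d\times n}$, $\nabla f_{C,\mathbf J}(x)=\frac1n\mathbf Je+\frac{1}{np_C}\sum_{i\in C}(\nabla f_i(x)-\mathbf J_{:i})$. Minibatch SAGA (JacSketch with $\mathbf W=\mathbf I$, sketch $\mathbf S=\mathbf I_S$, $\theta=1/p_S$): given $x^0\in\mathbb{R}^d$, $\mathbf J^0\in\mathbb{R}^{d\times n}$, for $k=0,1,\dots$ sample $S_k$ (independent copy of $S$), set $g^k=\frac1n\mathbf J^ke+\frac1{np_{S_k}}\sum_{i\in S_k}(\nabla f_i(x^k)-\mathbf J^k_{:i})$, $\mathbf J^{k+1}_{:i}=\nabla f_i(x^k)$ for $i\in S_k$ and $\mathbf J^{k+1}_{:i}=\mathbf J^k_{:i}$ otherwise, and $x^{k+1}=x^k-\alpha g^k$. $\mathbb{E}$ is over all randomness (iterates and $S$). *)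

theory Defs
  imports "HOL-Analysis.Analysis" "HOL-Library.Disjoint_Sets"
begin

text \<open>Columns of the Jacobian estimate J in R^(d x n) are modelled as a function
  nat => 'a (column i is J i, only i < n matters).  Gradients of the f_i are given
  by gradf i.\<close>

definition smooth_with_grad :: "('a::real_normed_vector \<Rightarrow> 'a) \<Rightarrow> real \<Rightarrow> bool" where
  "smooth_with_grad Gr L \<longleftrightarrow> (\<forall>x y. norm (Gr x - Gr y) \<le> L * norm (x - y))"

definition strongly_convex_with_grad ::
  "('a::real_inner \<Rightarrow> real) \<Rightarrow> ('a \<Rightarrow> 'a) \<Rightarrow> real \<Rightarrow> bool" where
  "strongly_convex_with_grad F Gr \<mu> \<longleftrightarrow>
     (\<forall>x y. F y \<ge> F x + Gr x \<bullet> (y - x) + \<mu> / 2 * (norm (y - x))\<^sup>2)"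

definition fC :: "(nat \<Rightarrow> 'a \<Rightarrow> real) \<Rightarrow> nat set \<Rightarrow> 'a \<Rightarrow> real" where
  "fC f C x = (1 / real (card C)) * (\<Sum>i\<in>C. f i x)"

definition gradC :: "(nat \<Rightarrow> 'a \<Rightarrow> 'a::real_vector) \<Rightarrow> nat set \<Rightarrow> 'a \<Rightarrow> 'a" where
  "gradC gradf C x = (1 / real (card C)) *\<^sub>R (\<Sum>i\<in>C. gradf i x)"

definition Jmean :: "nat \<Rightarrow> (nat \<Rightarrow> 'a::real_vector) \<Rightarrow> 'a" where
  "Jmean n J = (1 / real n) *\<^sub>R (\<Sum>i<n. J i)"

definition grad_est :: "nat \<Rightarrow> (nat \<Rightarrow> 'a \<Rightarrow> 'a::real_vector) \<Rightarrow> (nat set \<Rightarrow> real)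
    \<Rightarrow> nat set \<Rightarrow> (nat \<Rightarrow> 'a) \<Rightarrow> 'a \<Rightarrow> 'a" where
  "grad_est n gradf p C J x =
     Jmean n J + (1 / (real n * p C)) *\<^sub>R (\<Sum>i\<in>C. (gradf i x - J i))"

definition saga_step :: "nat \<Rightarrow> (nat \<Rightarrow> 'a \<Rightarrow> 'a::real_vector) \<Rightarrow> (nat set \<Rightarrow> real) \<Rightarrow> real
    \<Rightarrow> 'a \<times> (nat \<Rightarrow> 'a) \<Rightarrow> nat set \<Rightarrow> 'a \<times> (nat \<Rightarrow> 'a)" where
  "saga_step n gradf p \<alpha> xJ C =
     (let x = fst xJ; J = snd xJ
      in (x - \<alpha> *\<^sub>R grad_est n gradf p C J x,
          (\<lambda>i. if i \<in> C then gradf i x else J i)))"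

text \<open>Iterates (x^k, J^k) as a function of the realised samples S_0, S_1, ...\<close>
fun saga_iter :: "nat \<Rightarrow> (nat \<Rightarrow> 'a \<Rightarrow> 'a::real_vector) \<Rightarrow> (nat set \<Rightarrow> real) \<Rightarrow> real
    \<Rightarrow> 'a \<Rightarrow> (nat \<Rightarrow> 'a) \<Rightarrow> (nat \<Rightarrow> nat set) \<Rightarrow> nat \<Rightarrow> 'a \<times> (nat \<Rightarrow> 'a)" where
  "saga_iter n gradf p \<alpha> x0 J0 s 0 = (x0, J0)"
| "saga_iter n gradf p \<alpha> x0 J0 s (Suc k) =
     saga_step n gradf p \<alpha> (saga_iter n gradf p \<alpha> x0 J0 s k) (s k)"

definition saga_lyap :: "nat \<Rightarrow> nat \<Rightarrow> (nat \<Rightarrow> 'a \<Rightarrow> 'a::real_inner) \<Rightarrow> (nat set \<Rightarrow> real)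
    \<Rightarrow> (nat set \<Rightarrow> real) \<Rightarrow> real \<Rightarrow> 'a \<Rightarrow> nat set \<Rightarrow> 'a \<times> (nat \<Rightarrow> 'a) \<Rightarrow> real" where
  "saga_lyap n \<tau> gradf p L \<alpha> xs C xJ =
     (norm (fst xJ - xs))\<^sup>2
     + 2 * (real n / (4 * real \<tau> * L C)) * \<alpha>
         * (norm (Jmean n (snd xJ) - grad_est n gradf p C (snd xJ) xs))\<^sup>2"

text \<open>E[Psi_S^k]: expectation over the i.i.d. samples S_0..S_{k-1} (each with law
  Pr(S = C) = p C on G) and over an independent copy S of the sampling.  Since the
  sampling is supported on the finite set G, the expectation is the finite sum
  below.\<close>
definition saga_expected_lyap :: "nat \<Rightarrow> nat \<Rightarrow> (nat \<Rightarrow> 'a \<Rightarrow> 'a::real_inner) \<Rightarrow> nat set set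
    \<Rightarrow> (nat set \<Rightarrow> real) \<Rightarrow> (nat set \<Rightarrow> real) \<Rightarrow> real \<Rightarrow> 'a \<Rightarrow> (nat \<Rightarrow> 'a) \<Rightarrow> 'a
    \<Rightarrow> nat \<Rightarrow> real" where
  "saga_expected_lyap n \<tau> gradf G p L \<alpha> x0 J0 xs k =
     (\<Sum>s\<in>PiE {..<k} (\<lambda>_. G). (\<Prod>j<k. p (s j)) *
        (\<Sum>C\<in>G. p C * saga_lyap n \<tau> gradf p L \<alpha> xs C (saga_iter n gradf p \<alpha> x0 J0 s k)))"

end

theory Submission
  imports Defs
begin

(* Average the stochastic Lyapunov function over the independent copy S; conditioned on the
   current iterate, one SAGA step shrinks this average by the factor 1 - mu alpha.  The expected
   squared distance to x* produces a cross term and the second moment of the unbiased gradient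
   estimator; the second moment is bounded by the block deviations of the gradients and of the
   Jacobian columns from their values at x*, and block C of the Jacobian is refreshed with
   probability p_C.  Co-coercivity and strong monotonicity of the block gradients make the cross
   term dominate, and the stepsize bound is exactly what lets the coefficients combine block by
   block.  Averaging over the sample path gives the linear rate.  For the largest admissible
   stepsize, mu alpha = 1 / max_C (1/p_C + 4 L_C tau / (mu n p_C)), and
   (1 - mu alpha)^k <= exp (- mu alpha k) gives the iteration complexity. *)

lemma lipschitz_gradient_quadratic_upper_bound:
  fixes F :: "'a::real_inner \<Rightarrow> real"
  assumes deriv: "\<And>x. (F has_derivative (\<lambda>h. g x \<bullet> h)) (at x)"
    and lipschitz: "\<And>x y. norm (g x - g y) \<le> L * norm (x - y)"
  shows "F y \<le> F x + g x \<bullet> (y - x) + L / 2 * (norm (y - x))\<^sup>2"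
proof -
  define v where "v = y - x"
  define \<phi> where "\<phi> t = F (x + t *\<^sub>R v) - t * (g x \<bullet> v) - L / 2 * t\<^sup>2 * (norm v)\<^sup>2" for t
  have \<phi>_deriv: "DERIV \<phi> t :> (g (x + t *\<^sub>R v) - g x) \<bullet> v - L * t * (norm v)\<^sup>2" for t
  proof -
    have "((\<lambda>t. F (x + t *\<^sub>R v)) has_derivative (\<lambda>dt. g (x + t *\<^sub>R v) \<bullet> (dt *\<^sub>R v))) (at t)"
      by (rule has_derivative_compose[OF _ deriv]) (auto intro!: derivative_eq_intros)
    then have "((\<lambda>t. F (x + t *\<^sub>R v)) has_field_derivative g (x + t *\<^sub>R v) \<bullet> v) (at t)"
      by (rule has_derivative_imp_has_field_derivative) simp
    then show ?thesis unfolding \<phi>_def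
      by (auto intro!: derivative_eq_intros simp: power2_eq_square algebra_simps inner_diff_left)
  qed
  have "\<phi> 1 \<le> \<phi> 0"
  proof (rule DERIV_nonpos_imp_nonincreasing[of 0 1])
    fix t :: real assume t: "0 \<le> t" "t \<le> 1"
    have "(g (x + t *\<^sub>R v) - g x) \<bullet> v \<le> norm (g (x + t *\<^sub>R v) - g x) * norm v"
      by (rule norm_cauchy_schwarz)
    also have "\<dots> \<le> L * norm (t *\<^sub>R v) * norm v"
      using lipschitz[of "x + t *\<^sub>R v" x] by (intro mult_right_mono) auto
    also have "\<dots> = L * t * (norm v)\<^sup>2"
      using t by (simp add: power2_eq_square)
    finally show "\<exists>y. DERIV \<phi> t :> y \<and> y \<le> 0"
      using \<phi>_deriv[of t] by force
  qed simp
  then show ?thesis unfolding \<phi>_def v_def by simp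
qed

lemma convex_smooth_gradient_cocoercive:
  fixes F :: "'a::real_inner \<Rightarrow> real"
  assumes upper: "\<And>x y. F y \<le> F x + g x \<bullet> (y - x) + L / 2 * (norm (y - x))\<^sup>2"
    and lower: "\<And>x y. F x + g x \<bullet> (y - x) \<le> F y"
    and "L > 0"
  shows "(norm (g y - g x))\<^sup>2 / L \<le> (g y - g x) \<bullet> (y - x)"
proof -
  have gap: "(norm (g b - g a))\<^sup>2 / (2 * L) \<le> F b - F a - g a \<bullet> (b - a)" for a b
  proof -
    define w where "w = g b - g a"
    \<comment> \<open>the lower bound at \<open>a\<close> and the upper bound at \<open>b\<close>, both evaluated at the gradient step from \<open>b\<close>\<close>
    define z where "z = b - (1 / L) *\<^sub>R w"
    have "F a + g a \<bullet> (z - a) \<le> F z" by (rule lower)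
    moreover have "F z \<le> F b + g b \<bullet> (z - b) + L / 2 * (norm (z - b))\<^sup>2" by (rule upper)
    moreover have "g a \<bullet> (z - a) = g a \<bullet> (b - a) - (g a \<bullet> w) / L"
      unfolding z_def by (simp add: inner_diff_right)
    moreover have "g b \<bullet> (z - b) = - (g b \<bullet> w) / L"
      unfolding z_def by simp
    moreover have "L / 2 * (norm (z - b))\<^sup>2 = (norm w)\<^sup>2 / (2 * L)"
      unfolding z_def using \<open>L > 0\<close> by (simp add: power2_eq_square field_simps)
    moreover have "(g b \<bullet> w) / L - (g a \<bullet> w) / L = (norm w)\<^sup>2 / L"
      unfolding w_def by (simp add: power2_norm_eq_inner inner_diff_left diff_divide_distrib[symmetric])
    ultimately show ?thesis
      unfolding w_def by (simp add: field_simps)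
  qed
  have "(norm (g y - g x))\<^sup>2 / (2 * L) + (norm (g x - g y))\<^sup>2 / (2 * L)
      \<le> (F y - F x - g x \<bullet> (y - x)) + (F x - F y - g y \<bullet> (x - y))"
    using gap[of x y] gap[of y x] by linarith
  then show ?thesis
    by (simp add: norm_minus_commute inner_diff_left inner_diff_right field_simps)
qed

lemma strongly_convex_gradient_strongly_monotone:
  assumes "strongly_convex_with_grad F g \<mu>"
  shows "\<mu> * (norm (x - y))\<^sup>2 \<le> (g x - g y) \<bullet> (x - y)"
proof -
  have "F x + g x \<bullet> (y - x) + \<mu> / 2 * (norm (y - x))\<^sup>2 \<le> F y"
    and "F y + g y \<bullet> (x - y) + \<mu> / 2 * (norm (x - y))\<^sup>2 \<le> F x"
    using assms by (auto simp: strongly_convex_with_grad_def)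
  then show ?thesis
    by (simp add: norm_minus_commute inner_diff_left inner_diff_right)
qed

lemma strongly_convex_imp_gradient_lower_bound:
  assumes "strongly_convex_with_grad F g \<mu>" "\<mu> \<ge> 0"
  shows "F x + g x \<bullet> (y - x) \<le> F y"
proof -
  have "F x + g x \<bullet> (y - x) + \<mu> / 2 * (norm (y - x))\<^sup>2 \<le> F y"
    using assms(1) by (auto simp: strongly_convex_with_grad_def)
  with assms(2) show ?thesis
    by (smt (verit) divide_nonneg_nonneg mult_nonneg_nonneg zero_le_power2)
qed

lemma strong_convexity_le_smoothness:
  fixes g :: "'a::euclidean_space \<Rightarrow> 'a"
  assumes "strongly_convex_with_grad F g \<mu>" "smooth_with_grad g L"
  shows "\<mu> \<le> L"
proof -
  obtain b :: 'a where b: "b \<in> Basis" using nonempty_Basis by blast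
  have "\<mu> * (norm (b - 0))\<^sup>2 \<le> (g b - g 0) \<bullet> (b - 0)"
    using assms(1) by (rule strongly_convex_gradient_strongly_monotone)
  also have "\<dots> \<le> norm (g b - g 0) * norm (b - 0)"
    by (rule norm_cauchy_schwarz)
  also have "\<dots> \<le> L * norm (b - 0) * norm (b - 0)"
    using assms(2) unfolding smooth_with_grad_def by (intro mult_right_mono norm_ge_zero) blast
  finally show ?thesis using b by simp
qed

lemma norm_add_power2_le: "(norm (u + v))\<^sup>2 \<le> 2 * (norm u)\<^sup>2 + 2 * (norm (v::'a::real_inner))\<^sup>2"
proof -
  have "(norm (u + v))\<^sup>2 + (norm (u - v))\<^sup>2 = 2 * (norm u)\<^sup>2 + 2 * (norm v)\<^sup>2"
    by (simp add: power2_norm_eq_inner inner_add_left inner_add_right inner_diff_left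
        inner_diff_right inner_commute)
  then show ?thesis by (smt (verit) zero_le_power2)
qed

lemma weighted_variance_eq:
  fixes z :: "'i \<Rightarrow> 'a::real_inner"
  assumes "sum w I = 1"
  defines "m \<equiv> (\<Sum>i\<in>I. w i *\<^sub>R z i)"
  shows "(\<Sum>i\<in>I. w i * (norm (m - z i))\<^sup>2) = (\<Sum>i\<in>I. w i * (norm (z i))\<^sup>2) - (norm m)\<^sup>2"
proof -
  have "(\<Sum>i\<in>I. w i * (norm (m - z i))\<^sup>2)
      = (\<Sum>i\<in>I. w i * (norm m)\<^sup>2 - 2 * (m \<bullet> (w i *\<^sub>R z i)) + w i * (norm (z i))\<^sup>2)"
    by (rule sum.cong) (auto simp: power2_norm_eq_inner inner_diff_left inner_diff_right
        inner_commute algebra_simps)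
  also have "\<dots> = sum w I * (norm m)\<^sup>2 - 2 * (m \<bullet> m) + (\<Sum>i\<in>I. w i * (norm (z i))\<^sup>2)"
    unfolding m_def by (simp add: sum.distrib sum_subtractf sum_distrib_right sum_distrib_left
        inner_sum_right)
  finally show ?thesis using assms(1) by (simp add: power2_norm_eq_inner)
qed

lemma weighted_sum_norm_power2_step:
  fixes v :: "'i \<Rightarrow> 'a::real_inner"
  assumes "sum w I = 1"
  shows "(\<Sum>i\<in>I. w i * (norm (u - c *\<^sub>R v i))\<^sup>2)
    = (norm u)\<^sup>2 - 2 * c * ((\<Sum>i\<in>I. w i *\<^sub>R v i) \<bullet> u) + c\<^sup>2 * (\<Sum>i\<in>I. w i * (norm (v i))\<^sup>2)"
proof -
  have expand: "(norm (u - c *\<^sub>R y))\<^sup>2 = (norm u)\<^sup>2 - 2 * c * (y \<bullet> u) + c\<^sup>2 * (norm y)\<^sup>2" for y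
    unfolding power2_norm_eq_inner
    by (simp add: inner_diff_left inner_diff_right inner_commute power2_eq_square algebra_simps)
  have "(\<Sum>i\<in>I. w i * (norm (u - c *\<^sub>R v i))\<^sup>2)
      = (\<Sum>i\<in>I. w i * (norm u)\<^sup>2 - 2 * c * ((w i *\<^sub>R v i) \<bullet> u) + c\<^sup>2 * (w i * (norm (v i))\<^sup>2))"
    unfolding expand by (simp add: algebra_simps)
  also have "\<dots> = sum w I * (norm u)\<^sup>2 - 2 * c * ((\<Sum>i\<in>I. w i *\<^sub>R v i) \<bullet> u)
      + c\<^sup>2 * (\<Sum>i\<in>I. w i * (norm (v i))\<^sup>2)"
    by (simp add: sum.distrib sum_subtractf sum_distrib_right sum_distrib_left inner_sum_left)
  finally show ?thesis using assms by simp
qed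

lemma sum_PiE_lessThan_Suc:
  fixes p :: "'b \<Rightarrow> 'c::comm_semiring_1"
  shows "(\<Sum>s\<in>PiE {..<Suc k} (\<lambda>_. A). (\<Prod>j<Suc k. p (s j)) * h s)
    = (\<Sum>s\<in>PiE {..<k} (\<lambda>_. A). (\<Prod>j<k. p (s j)) * (\<Sum>c\<in>A. p c * h (s(k := c))))"
proof -
  let ?F = "\<lambda>s. (\<Prod>j<Suc k. p (s j)) * h s"
  have inj: "inj_on (\<lambda>(c, s). s(k := c)) (A \<times> PiE {..<k} (\<lambda>_. A))"
    by (rule inj_combinator) simp
  have F_upd: "?F (s(k := c)) = (\<Prod>j<k. p (s j)) * (p c * h (s(k := c)))" for s c
  proof -
    have "(\<Prod>j<k. p ((s(k := c)) j)) = (\<Prod>j<k. p (s j))"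
      by (rule prod.cong) auto
    then show ?thesis by (simp add: prod.lessThan_Suc mult_ac)
  qed
  have "(\<Sum>s\<in>PiE {..<Suc k} (\<lambda>_. A). ?F s) = (\<Sum>(c, s)\<in>A \<times> PiE {..<k} (\<lambda>_. A). ?F (s(k := c)))"
    unfolding lessThan_Suc PiE_insert_eq sum.reindex[OF inj] by (simp add: case_prod_beta comp_def)
  also have "\<dots> = (\<Sum>c\<in>A. \<Sum>s\<in>PiE {..<k} (\<lambda>_. A). ?F (s(k := c)))"
    by (rule sum.cartesian_product[symmetric])
  also have "\<dots> = (\<Sum>s\<in>PiE {..<k} (\<lambda>_. A). (\<Prod>j<k. p (s j)) * (\<Sum>c\<in>A. p c * h (s(k := c))))"
    unfolding F_upd by (subst sum.swap) (simp add: sum_distrib_left)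
  finally show ?thesis .
qed

lemma power_one_minus_le_of_ln:
  fixes q \<epsilon> :: real
  assumes "q \<le> 1" "0 < \<epsilon>" "ln (1 / \<epsilon>) \<le> q * k"
  shows "(1 - q) ^ k \<le> \<epsilon>"
proof -
  have "(1 - q) ^ k \<le> exp (- q) ^ k"
    using assms(1) exp_ge_add_one_self[of "- q"] by (intro power_mono) auto
  also have "\<dots> = exp (- (q * k))"
    by (simp add: exp_of_nat_mult[symmetric] mult.commute)
  also have "\<dots> \<le> exp (- ln (1 / \<epsilon>))"
    using assms(3) by simp
  also have "\<dots> = \<epsilon>"
    using assms(2) by (simp add: ln_div)
  finally show ?thesis .
qed

(* One block of the one-step estimate: B is the cross term of the block, A and D the squared
   deviations of its gradients and Jacobian columns, and W its weight in the Lyapunov function. *)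
lemma saga_coefficient_inequality:
  fixes \<alpha> \<mu> \<tau> L n p e A D B :: real
  assumes pos: "\<alpha> > 0" "\<mu> \<ge> 0" "\<tau> > 0" "L > 0" "n > 0" "p > 0"
    and nonneg: "A \<ge> 0" "D \<ge> 0"
    and B: "\<tau> * \<mu> * e + A / (\<tau> * L) \<le> 2 * B"
    and stepsize: "\<alpha> * (\<mu> + 4 * L * \<tau> / n) \<le> p"
  defines "W \<equiv> \<alpha> / (2 * \<tau> * L * n * p)"
  shows "- (2 * \<alpha> / n) * B + \<alpha>\<^sup>2 * (2 * (A + D) / (n\<^sup>2 * p)) + W * (p * A + (1 - p) * D)
    \<le> - \<mu> * \<alpha> * (\<tau> / n) * e + (1 - \<mu> * \<alpha>) * (W * D)"
proof -
  define c where "c = \<alpha> / (2 * \<tau> * L * n\<^sup>2 * p)"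
  have slack: "0 \<le> n * p - \<alpha> * \<mu> * n - 4 * \<alpha> * L * \<tau>"
  proof -
    have "\<alpha> * \<mu> * n + 4 * \<alpha> * L * \<tau> = \<alpha> * (\<mu> + 4 * L * \<tau> / n) * n"
      using pos by (simp add: field_simps)
    also have "\<dots> \<le> p * n"
      using stepsize pos by (intro mult_right_mono) auto
    finally show ?thesis by (simp add: mult.commute)
  qed
  have "(- \<mu> * \<alpha> * (\<tau> / n) * e + (1 - \<mu> * \<alpha>) * (W * D))
      - (- (2 * \<alpha> / n) * B + \<alpha>\<^sup>2 * (2 * (A + D) / (n\<^sup>2 * p)) + W * (p * A + (1 - p) * D))
    = (\<alpha> / n) * (2 * B - \<tau> * \<mu> * e - A / (\<tau> * L))
      + c * (n * p - 4 * \<alpha> * L * \<tau>) * A + c * (n * p - \<alpha> * \<mu> * n - 4 * \<alpha> * L * \<tau>) * D"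
    using pos unfolding W_def c_def by (simp add: field_simps power2_eq_square)
  moreover have "0 \<le> (\<alpha> / n) * (2 * B - \<tau> * \<mu> * e - A / (\<tau> * L))"
    using B pos by simp
  moreover have "0 \<le> c * (n * p - 4 * \<alpha> * L * \<tau>) * A"
  proof -
    have "0 \<le> \<alpha> * \<mu> * n" using pos by simp
    with slack have "0 \<le> n * p - 4 * \<alpha> * L * \<tau>" by linarith
    then show ?thesis using pos nonneg unfolding c_def by (intro mult_nonneg_nonneg) auto
  qed
  moreover have "0 \<le> c * (n * p - \<alpha> * \<mu> * n - 4 * \<alpha> * L * \<tau>) * D"
    using slack pos nonneg unfolding c_def by (intro mult_nonneg_nonneg) auto
  ultimately show ?thesis by linarith
qed

lemma saga_iter_cong:
  "(\<And>j. j < k \<Longrightarrow> s j = s' j) \<Longrightarrow> saga_iter n gradf p \<alpha> x0 J0 s k = saga_iter n gradf p \<alpha> x0 J0 s' k"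
  by (induction k) auto

lemma saga_iter_fun_upd_Suc:
  "saga_iter n gradf p \<alpha> x0 J0 (s(k := C)) (Suc k) = saga_step n gradf p \<alpha> (saga_iter n gradf p \<alpha> x0 J0 s k) C"
  by (simp add: saga_iter_cong[of k "s(k := C)" s])

locale minibatch_saga =
  fixes n \<tau> :: nat
    and f :: "nat \<Rightarrow> 'a::euclidean_space \<Rightarrow> real"
    and gradf :: "nat \<Rightarrow> 'a \<Rightarrow> 'a"
    and xs :: 'a
    and G :: "nat set set"
    and p L :: "nat set \<Rightarrow> real"
    and \<mu> :: real
  assumes n_pos: "n > 0"
    and grad: "\<And>i x. i < n \<Longrightarrow> (f i has_derivative (\<lambda>h. gradf i x \<bullet> h)) (at x)"
    and minimizer: "\<And>x. (1 / real n) * (\<Sum>i<n. f i xs) \<le> (1 / real n) * (\<Sum>i<n. f i x)"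
    and partition: "partition_on {..<n} G"
    and block_size: "\<And>C. C \<in> G \<Longrightarrow> card C = \<tau>"
    and p_pos: "\<And>C. C \<in> G \<Longrightarrow> p C > 0"
    and p_sum: "(\<Sum>C\<in>G. p C) = 1"
    and mu_pos: "\<mu> > 0"
    and smooth: "\<And>C. C \<in> G \<Longrightarrow> smooth_with_grad (gradC gradf C) (L C)"
    and strconv: "\<And>C. C \<in> G \<Longrightarrow> strongly_convex_with_grad (fC f C) (gradC gradf C) \<mu>"
begin

lemma finite_G: "finite G"
  using finite_elements[OF _ partition] by simp

lemma block_subset: "C \<in> G \<Longrightarrow> C \<subseteq> {..<n}"
  using partition by (auto simp: partition_on_def)

lemma blocks_disjoint: "C \<in> G \<Longrightarrow> C' \<in> G \<Longrightarrow> C \<noteq> C' \<Longrightarrow> C \<inter> C' = {}"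
  using partition by (auto simp: partition_on_def disjoint_def)

lemma G_nonempty: "G \<noteq> {}"
  using partition n_pos by (auto simp: partition_on_def)

lemma sum_over_blocks: "(\<Sum>C\<in>G. \<Sum>i\<in>C. h i) = (\<Sum>i<n. h i)"
  by (rule sum.partition[OF _ partition, symmetric]) simp

lemma card_G_times_tau: "real (card G) * real \<tau> = real n"
proof -
  have "real n = (\<Sum>C\<in>G. \<Sum>i\<in>C. 1)"
    using sum_over_blocks[of "\<lambda>_. 1 :: real"] by simp
  also have "\<dots> = real (card G) * real \<tau>"
    using block_size by simp
  finally show ?thesis ..
qed

lemma tau_pos: "\<tau> > 0"
  using card_G_times_tau n_pos by (cases "\<tau> = 0") auto

lemma p_le_one: "C \<in> G \<Longrightarrow> p C \<le> 1"
  using p_sum sum.remove[OF finite_G, of C p] sum_nonneg[of "G - {C}" p] p_pos by force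

lemma L_pos: "C \<in> G \<Longrightarrow> L C > 0"
  using strong_convexity_le_smoothness[OF strconv smooth] mu_pos by force

lemma grad_sum_at_minimizer: "(\<Sum>i<n. gradf i xs) = 0"
proof -
  let ?F = "\<lambda>x. (1 / real n) * (\<Sum>i<n. f i x)"
  have deriv: "(?F has_derivative (\<lambda>h. (1 / real n) * (\<Sum>i<n. gradf i xs \<bullet> h))) (at xs)"
    by (intro has_derivative_mult_right has_derivative_sum grad) auto
  have "(\<lambda>h. (1 / real n) * (\<Sum>i<n. gradf i xs \<bullet> h)) = (\<lambda>h. 0)"
    by (rule differential_zero_maxmin[OF _ _ deriv, of UNIV]) (use minimizer in auto)
  then have "(1 / real n) * ((\<Sum>i<n. gradf i xs) \<bullet> (\<Sum>i<n. gradf i xs)) = 0"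
    by (metis inner_sum_left)
  then show ?thesis
    using n_pos by simp
qed

lemma fC_has_derivative:
  assumes "C \<in> G"
  shows "(fC f C has_derivative (\<lambda>h. gradC gradf C x \<bullet> h)) (at x)"
proof -
  have "((\<lambda>x. (1 / real (card C)) * (\<Sum>i\<in>C. f i x)) has_derivative
      (\<lambda>h. (1 / real (card C)) * (\<Sum>i\<in>C. gradf i x \<bullet> h))) (at x)"
    by (intro has_derivative_mult_right has_derivative_sum grad) (use block_subset[OF assms] in auto)
  then show ?thesis
    by (simp add: fC_def[abs_def] gradC_def inner_sum_left)
qed

definition grad_dev :: "'a \<Rightarrow> nat set \<Rightarrow> 'a" where
  "grad_dev x C = (\<Sum>i\<in>C. gradf i x - gradf i xs)"

definition jac_dev :: "(nat \<Rightarrow> 'a) \<Rightarrow> nat set \<Rightarrow> 'a" where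
  "jac_dev J C = (\<Sum>i\<in>C. J i - gradf i xs)"

definition lyap_mean :: "real \<Rightarrow> 'a \<times> (nat \<Rightarrow> 'a) \<Rightarrow> real" where
  "lyap_mean \<alpha> xJ = (\<Sum>C\<in>G. p C * saga_lyap n \<tau> gradf p L \<alpha> xs C xJ)"

lemma block_gradient_inequality:
  assumes C: "C \<in> G"
  shows "real \<tau> * \<mu> * (norm (x - xs))\<^sup>2 + (norm (grad_dev x C))\<^sup>2 / (real \<tau> * L C)
    \<le> 2 * (grad_dev x C \<bullet> (x - xs))"
proof -
  let ?g = "gradC gradf C"
  define d where "d = ?g x - ?g xs"
  have dev: "grad_dev x C = real \<tau> *\<^sub>R d"
    using tau_pos block_size[OF C]
    by (simp add: grad_dev_def d_def gradC_def sum_subtractf scaleR_diff_right)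
  have upper: "fC f C b \<le> fC f C a + ?g a \<bullet> (b - a) + L C / 2 * (norm (b - a))\<^sup>2" for a b
    by (rule lipschitz_gradient_quadratic_upper_bound[OF fC_has_derivative[OF C]])
      (use smooth[OF C] in \<open>auto simp: smooth_with_grad_def\<close>)
  have lower: "fC f C a + ?g a \<bullet> (b - a) \<le> fC f C b" for a b
    using strconv[OF C] mu_pos by (intro strongly_convex_imp_gradient_lower_bound) auto
  have "(norm d)\<^sup>2 / L C \<le> d \<bullet> (x - xs)"
    unfolding d_def by (rule convex_smooth_gradient_cocoercive[OF upper lower L_pos[OF C]])
  moreover have "\<mu> * (norm (x - xs))\<^sup>2 \<le> d \<bullet> (x - xs)"
    unfolding d_def by (rule strongly_convex_gradient_strongly_monotone[OF strconv[OF C]])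
  ultimately have "real \<tau> * (\<mu> * (norm (x - xs))\<^sup>2 + (norm d)\<^sup>2 / L C) \<le> real \<tau> * (2 * (d \<bullet> (x - xs)))"
    by (intro mult_left_mono) auto
  then show ?thesis
    using tau_pos L_pos[OF C] by (simp add: dev power2_eq_square field_simps)
qed

lemma lyap_block_eq:
  assumes C: "C \<in> G"
  shows "p C * saga_lyap n \<tau> gradf p L \<alpha> xs C (x, J)
    = p C * (norm (x - xs))\<^sup>2 + \<alpha> / (2 * real \<tau> * L C * real n * p C) * (norm (jac_dev J C))\<^sup>2"
proof -
  have "(\<Sum>i\<in>C. gradf i xs - J i) = - jac_dev J C"
    by (simp add: jac_dev_def sum_subtractf)
  then have "Jmean n J - grad_est n gradf p C J xs = (1 / (real n * p C)) *\<^sub>R jac_dev J C"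
    by (simp add: grad_est_def)
  then show ?thesis
    using p_pos[OF C] L_pos[OF C] n_pos tau_pos
    by (simp add: saga_lyap_def power_divide power2_eq_square field_simps)
qed

lemma lyap_mean_eq:
  "lyap_mean \<alpha> (x, J)
    = (norm (x - xs))\<^sup>2 + (\<Sum>C\<in>G. \<alpha> / (2 * real \<tau> * L C * real n * p C) * (norm (jac_dev J C))\<^sup>2)"
proof -
  have "lyap_mean \<alpha> (x, J)
      = (\<Sum>C\<in>G. p C * (norm (x - xs))\<^sup>2 + \<alpha> / (2 * real \<tau> * L C * real n * p C) * (norm (jac_dev J C))\<^sup>2)"
    unfolding lyap_mean_def by (rule sum.cong) (auto simp: lyap_block_eq)
  then show ?thesis
    using p_sum by (simp add: sum.distrib flip: sum_distrib_right)
qed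

lemma lyap_mean_nonneg:
  assumes "\<alpha> \<ge> 0"
  shows "0 \<le> lyap_mean \<alpha> xJ"
proof (cases xJ)
  case (Pair x J)
  have "0 \<le> \<alpha> / (2 * real \<tau> * L C * real n * p C) * (norm (jac_dev J C))\<^sup>2" if "C \<in> G" for C
    using assms p_pos[OF that] L_pos[OF that] by simp
  then show ?thesis
    unfolding Pair lyap_mean_eq by (intro add_nonneg_nonneg sum_nonneg) auto
qed

lemma grad_est_eq:
  "grad_est n gradf p C J x
    = (1 / (real n * p C)) *\<^sub>R grad_dev x C + (Jmean n J - (1 / (real n * p C)) *\<^sub>R jac_dev J C)"
proof -
  have "(\<Sum>i\<in>C. gradf i x - J i) = grad_dev x C - jac_dev J C"
    by (simp add: grad_dev_def jac_dev_def sum_subtractf)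
  then show ?thesis
    by (simp add: grad_est_def scaleR_diff_right)
qed

lemma Jmean_eq_weighted: "Jmean n J = (\<Sum>C\<in>G. p C *\<^sub>R ((1 / (real n * p C)) *\<^sub>R jac_dev J C))"
proof -
  have "(\<Sum>C\<in>G. jac_dev J C) = (\<Sum>i<n. J i)"
    using sum_over_blocks[of "\<lambda>i. J i - gradf i xs"] grad_sum_at_minimizer
    by (simp add: jac_dev_def sum_subtractf)
  moreover have "(\<Sum>C\<in>G. p C *\<^sub>R ((1 / (real n * p C)) *\<^sub>R jac_dev J C)) = (\<Sum>C\<in>G. (1 / real n) *\<^sub>R jac_dev J C)"
    by (rule sum.cong) (use p_pos in \<open>auto simp: less_imp_neq[symmetric]\<close>)
  ultimately show ?thesis
    by (simp add: Jmean_def flip: scaleR_sum_right)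
qed

lemma grad_est_mean:
  "(\<Sum>C\<in>G. p C *\<^sub>R grad_est n gradf p C J x) = (1 / real n) *\<^sub>R (\<Sum>C\<in>G. grad_dev x C)"
proof -
  define z where "z C = (1 / (real n * p C)) *\<^sub>R jac_dev J C" for C
  have "p C *\<^sub>R grad_est n gradf p C J x
      = (1 / real n) *\<^sub>R grad_dev x C + (p C *\<^sub>R Jmean n J - p C *\<^sub>R z C)" if "C \<in> G" for C
    using p_pos[OF that] by (simp add: grad_est_eq z_def scaleR_add_right scaleR_diff_right)
  then have "(\<Sum>C\<in>G. p C *\<^sub>R grad_est n gradf p C J x)
      = (\<Sum>C\<in>G. (1 / real n) *\<^sub>R grad_dev x C) + ((\<Sum>C\<in>G. p C) *\<^sub>R Jmean n J - (\<Sum>C\<in>G. p C *\<^sub>R z C))"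
    by (simp add: sum.distrib sum_subtractf scaleR_sum_left)
  also have "(\<Sum>C\<in>G. p C *\<^sub>R z C) = Jmean n J"
    unfolding z_def by (rule Jmean_eq_weighted[symmetric])
  finally show ?thesis
    by (simp add: p_sum scaleR_sum_right)
qed

lemma grad_est_second_moment:
  "(\<Sum>C\<in>G. p C * (norm (grad_est n gradf p C J x))\<^sup>2)
    \<le> (\<Sum>C\<in>G. 2 * ((norm (grad_dev x C))\<^sup>2 + (norm (jac_dev J C))\<^sup>2) / ((real n)\<^sup>2 * p C))"
proof -
  define z where "z C = (1 / (real n * p C)) *\<^sub>R jac_dev J C" for C
  have mean: "Jmean n J = (\<Sum>C\<in>G. p C *\<^sub>R z C)"
    unfolding z_def by (rule Jmean_eq_weighted)
  have scaled: "p C * (norm ((1 / (real n * p C)) *\<^sub>R v))\<^sup>2 = (norm v)\<^sup>2 / ((real n)\<^sup>2 * p C)"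
    if "C \<in> G" for C and v :: 'a
    using p_pos[OF that] n_pos by (simp add: power2_eq_square field_simps)
  have pointwise: "p C * (norm (grad_est n gradf p C J x))\<^sup>2
      \<le> 2 * ((norm (grad_dev x C))\<^sup>2 / ((real n)\<^sup>2 * p C)) + 2 * (p C * (norm (Jmean n J - z C))\<^sup>2)"
    if C: "C \<in> G" for C
  proof -
    have "p C * (norm (grad_est n gradf p C J x))\<^sup>2
        \<le> p C * (2 * (norm ((1 / (real n * p C)) *\<^sub>R grad_dev x C))\<^sup>2 + 2 * (norm (Jmean n J - z C))\<^sup>2)"
      unfolding grad_est_eq z_def using p_pos[OF C]
      by (intro mult_left_mono norm_add_power2_le) auto
    also have "\<dots> = 2 * (p C * (norm ((1 / (real n * p C)) *\<^sub>R grad_dev x C))\<^sup>2)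
        + 2 * (p C * (norm (Jmean n J - z C))\<^sup>2)"
      by (simp only: distrib_left mult.left_commute)
    finally show ?thesis
      by (simp only: scaled[OF C])
  qed
  have "(\<Sum>C\<in>G. p C * (norm (grad_est n gradf p C J x))\<^sup>2)
      \<le> 2 * (\<Sum>C\<in>G. (norm (grad_dev x C))\<^sup>2 / ((real n)\<^sup>2 * p C))
        + 2 * (\<Sum>C\<in>G. p C * (norm (Jmean n J - z C))\<^sup>2)"
    using sum_mono[OF pointwise] by (simp add: sum.distrib sum_distrib_left)
  also have "(\<Sum>C\<in>G. p C * (norm (Jmean n J - z C))\<^sup>2) \<le> (\<Sum>C\<in>G. p C * (norm (z C))\<^sup>2)"
    unfolding mean weighted_variance_eq[OF p_sum] by simp
  also have "\<dots> = (\<Sum>C\<in>G. (norm (jac_dev J C))\<^sup>2 / ((real n)\<^sup>2 * p C))"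
    unfolding z_def by (rule sum.cong) (simp_all only: scaled)
  finally show ?thesis
    by (simp add: sum_distrib_left sum.distrib add_divide_distrib distrib_left)
qed

lemma jacobian_update_mean:
  assumes C: "C \<in> G"
  shows "(\<Sum>C'\<in>G. p C' * (norm (jac_dev (\<lambda>i. if i \<in> C' then gradf i x else J i) C))\<^sup>2)
    = p C * (norm (grad_dev x C))\<^sup>2 + (1 - p C) * (norm (jac_dev J C))\<^sup>2"
proof -
  have "jac_dev (\<lambda>i. if i \<in> C' then gradf i x else J i) C = jac_dev J C" if "C' \<in> G - {C}" for C'
    unfolding jac_dev_def using blocks_disjoint[OF C, of C'] that by (intro sum.cong) auto
  then have "(\<Sum>C'\<in>G - {C}. p C' * (norm (jac_dev (\<lambda>i. if i \<in> C' then gradf i x else J i) C))\<^sup>2)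
      = (\<Sum>C'\<in>G - {C}. p C') * (norm (jac_dev J C))\<^sup>2"
    by (simp add: sum_distrib_right)
  moreover have "(\<Sum>C'\<in>G - {C}. p C') = 1 - p C"
    using sum.remove[OF finite_G C, of p] p_sum by simp
  moreover have "jac_dev (\<lambda>i. if i \<in> C then gradf i x else J i) C = grad_dev x C"
    by (simp add: jac_dev_def grad_dev_def)
  ultimately show ?thesis
    by (simp add: sum.remove[OF finite_G C])
qed

lemma iterate_dist_mean:
  "(\<Sum>C\<in>G. p C * (norm (x - \<alpha> *\<^sub>R grad_est n gradf p C J x - xs))\<^sup>2)
    = (norm (x - xs))\<^sup>2 - (2 * \<alpha> / real n) * (\<Sum>C\<in>G. grad_dev x C \<bullet> (x - xs))
      + \<alpha>\<^sup>2 * (\<Sum>C\<in>G. p C * (norm (grad_est n gradf p C J x))\<^sup>2)"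
proof -
  have "(\<Sum>C\<in>G. p C * (norm (x - \<alpha> *\<^sub>R grad_est n gradf p C J x - xs))\<^sup>2)
      = (\<Sum>C\<in>G. p C * (norm ((x - xs) - \<alpha> *\<^sub>R grad_est n gradf p C J x))\<^sup>2)"
    by (simp add: algebra_simps)
  also have "\<dots> = (norm (x - xs))\<^sup>2 - 2 * \<alpha> * ((\<Sum>C\<in>G. p C *\<^sub>R grad_est n gradf p C J x) \<bullet> (x - xs))
      + \<alpha>\<^sup>2 * (\<Sum>C\<in>G. p C * (norm (grad_est n gradf p C J x))\<^sup>2)"
    by (rule weighted_sum_norm_power2_step[OF p_sum])
  finally show ?thesis
    by (simp add: grad_est_mean inner_sum_left)
qed

lemma lyap_mean_after_step_eq:
  "(\<Sum>C'\<in>G. p C' * lyap_mean \<alpha> (saga_step n gradf p \<alpha> (x, J) C'))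
    = (\<Sum>C'\<in>G. p C' * (norm (x - \<alpha> *\<^sub>R grad_est n gradf p C' J x - xs))\<^sup>2)
      + (\<Sum>C\<in>G. \<alpha> / (2 * real \<tau> * L C * real n * p C)
          * (p C * (norm (grad_dev x C))\<^sup>2 + (1 - p C) * (norm (jac_dev J C))\<^sup>2))"
proof -
  define W where "W C = \<alpha> / (2 * real \<tau> * L C * real n * p C)" for C
  let ?J' = "\<lambda>C' i. if i \<in> C' then gradf i x else J i"
  have "(\<Sum>C'\<in>G. p C' * lyap_mean \<alpha> (saga_step n gradf p \<alpha> (x, J) C'))
      = (\<Sum>C'\<in>G. p C' * (norm (x - \<alpha> *\<^sub>R grad_est n gradf p C' J x - xs))\<^sup>2)
        + (\<Sum>C'\<in>G. \<Sum>C\<in>G. W C * (p C' * (norm (jac_dev (?J' C') C))\<^sup>2))"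
    by (simp add: saga_step_def lyap_mean_eq W_def distrib_left sum.distrib sum_distrib_left
        mult.left_commute)
  also have "(\<Sum>C'\<in>G. \<Sum>C\<in>G. W C * (p C' * (norm (jac_dev (?J' C') C))\<^sup>2))
      = (\<Sum>C\<in>G. W C * (\<Sum>C'\<in>G. p C' * (norm (jac_dev (?J' C') C))\<^sup>2))"
    by (subst sum.swap) (simp add: sum_distrib_left)
  also have "\<dots> = (\<Sum>C\<in>G. W C * (p C * (norm (grad_dev x C))\<^sup>2 + (1 - p C) * (norm (jac_dev J C))\<^sup>2))"
    by (rule sum.cong) (simp_all add: jacobian_update_mean)
  finally show ?thesis
    unfolding W_def .
qed

lemma lyap_mean_after_step_le:
  "(\<Sum>C'\<in>G. p C' * lyap_mean \<alpha> (saga_step n gradf p \<alpha> (x, J) C'))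
    \<le> (norm (x - xs))\<^sup>2 + (\<Sum>C\<in>G. - (2 * \<alpha> / real n) * (grad_dev x C \<bullet> (x - xs))
        + \<alpha>\<^sup>2 * (2 * ((norm (grad_dev x C))\<^sup>2 + (norm (jac_dev J C))\<^sup>2) / ((real n)\<^sup>2 * p C))
        + \<alpha> / (2 * real \<tau> * L C * real n * p C)
          * (p C * (norm (grad_dev x C))\<^sup>2 + (1 - p C) * (norm (jac_dev J C))\<^sup>2))"
    (is "_ \<le> _ + (\<Sum>C\<in>G. - ?c * ?cross C + \<alpha>\<^sup>2 * ?moment C + ?jac C)")
proof -
  have "(\<Sum>C'\<in>G. p C' * lyap_mean \<alpha> (saga_step n gradf p \<alpha> (x, J) C'))
      = (norm (x - xs))\<^sup>2 - ?c * (\<Sum>C\<in>G. ?cross C)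
        + \<alpha>\<^sup>2 * (\<Sum>C\<in>G. p C * (norm (grad_est n gradf p C J x))\<^sup>2) + (\<Sum>C\<in>G. ?jac C)"
    unfolding lyap_mean_after_step_eq iterate_dist_mean ..
  also have "\<dots> \<le> (norm (x - xs))\<^sup>2 - ?c * (\<Sum>C\<in>G. ?cross C)
        + \<alpha>\<^sup>2 * (\<Sum>C\<in>G. ?moment C) + (\<Sum>C\<in>G. ?jac C)"
    using grad_est_second_moment by (simp add: mult_left_mono)
  finally show ?thesis
    by (simp add: sum.distrib sum_distrib_left sum_negf sum_subtractf)
qed

lemma lyap_mean_step_le:
  assumes alpha_pos: "\<alpha> > 0"
    and stepsize: "\<And>C. C \<in> G \<Longrightarrow> \<alpha> * (\<mu> + 4 * L C * real \<tau> / real n) \<le> p C"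
  shows "(\<Sum>C'\<in>G. p C' * lyap_mean \<alpha> (saga_step n gradf p \<alpha> (x, J) C'))
    \<le> (1 - \<mu> * \<alpha>) * lyap_mean \<alpha> (x, J)"
proof -
  define e where "e = (norm (x - xs))\<^sup>2"
  define W where "W C = \<alpha> / (2 * real \<tau> * L C * real n * p C)" for C
  define A where "A C = (norm (grad_dev x C))\<^sup>2" for C
  define D where "D C = (norm (jac_dev J C))\<^sup>2" for C
  define before where "before C = - (2 * \<alpha> / real n) * (grad_dev x C \<bullet> (x - xs))
      + \<alpha>\<^sup>2 * (2 * (A C + D C) / ((real n)\<^sup>2 * p C)) + W C * (p C * A C + (1 - p C) * D C)" for C
  have "(\<Sum>C'\<in>G. p C' * lyap_mean \<alpha> (saga_step n gradf p \<alpha> (x, J) C')) \<le> e + (\<Sum>C\<in>G. before C)"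
    unfolding e_def before_def W_def A_def D_def by (rule lyap_mean_after_step_le)
  also have "\<dots> \<le> e + (\<Sum>C\<in>G. - \<mu> * \<alpha> * (real \<tau> / real n) * e + (1 - \<mu> * \<alpha>) * (W C * D C))"
  proof (intro add_left_mono sum_mono)
    fix C assume C: "C \<in> G"
    have "real \<tau> * \<mu> * e + A C / (real \<tau> * L C) \<le> 2 * (grad_dev x C \<bullet> (x - xs))"
      unfolding e_def A_def by (rule block_gradient_inequality[OF C])
    then show "before C \<le> - \<mu> * \<alpha> * (real \<tau> / real n) * e + (1 - \<mu> * \<alpha>) * (W C * D C)"
      unfolding before_def W_def
      using alpha_pos mu_pos tau_pos n_pos L_pos[OF C] p_pos[OF C] stepsize[OF C]
      by (intro saga_coefficient_inequality) (auto simp: A_def D_def)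
  qed
  also have "\<dots> = (1 - \<mu> * \<alpha>) * (e + (\<Sum>C\<in>G. W C * D C))"
  proof -
    have "(\<Sum>C\<in>G. - \<mu> * \<alpha> * (real \<tau> / real n) * e) = - \<mu> * \<alpha> * e * (real (card G) * real \<tau> / real n)"
      by simp
    also have "\<dots> = - \<mu> * \<alpha> * e"
      using card_G_times_tau n_pos by simp
    finally have "e + (\<Sum>C\<in>G. - \<mu> * \<alpha> * (real \<tau> / real n) * e + (1 - \<mu> * \<alpha>) * (W C * D C))
        = e - \<mu> * \<alpha> * e + (1 - \<mu> * \<alpha>) * (\<Sum>C\<in>G. W C * D C)"
      by (simp only: sum.distrib sum_distrib_left)
    then show ?thesis
      by (simp only: ring_distribs)
  qed
  also have "\<dots> = (1 - \<mu> * \<alpha>) * lyap_mean \<alpha> (x, J)"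
    unfolding lyap_mean_eq e_def W_def D_def ..
  finally show ?thesis .
qed

lemma saga_expected_lyap_eq:
  "saga_expected_lyap n \<tau> gradf G p L \<alpha> x0 J0 xs k
    = (\<Sum>s\<in>PiE {..<k} (\<lambda>_. G). (\<Prod>j<k. p (s j)) * lyap_mean \<alpha> (saga_iter n gradf p \<alpha> x0 J0 s k))"
  by (simp add: saga_expected_lyap_def lyap_mean_def)

lemma sample_path_prob_nonneg: "s \<in> PiE {..<k} (\<lambda>_. G) \<Longrightarrow> 0 \<le> (\<Prod>j<k. p (s j))"
  by (intro prod_nonneg) (auto intro: less_imp_le[OF p_pos])

lemma saga_expected_lyap_nonneg:
  "\<alpha> \<ge> 0 \<Longrightarrow> 0 \<le> saga_expected_lyap n \<tau> gradf G p L \<alpha> x0 J0 xs k"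
  unfolding saga_expected_lyap_eq
  by (intro sum_nonneg mult_nonneg_nonneg sample_path_prob_nonneg lyap_mean_nonneg)

lemma saga_expected_lyap_Suc_le:
  assumes alpha_pos: "\<alpha> > 0"
    and stepsize: "\<And>C. C \<in> G \<Longrightarrow> \<alpha> * (\<mu> + 4 * L C * real \<tau> / real n) \<le> p C"
  shows "saga_expected_lyap n \<tau> gradf G p L \<alpha> x0 J0 xs (Suc k)
    \<le> (1 - \<mu> * \<alpha>) * saga_expected_lyap n \<tau> gradf G p L \<alpha> x0 J0 xs k"
proof -
  let ?it = "\<lambda>s. saga_iter n gradf p \<alpha> x0 J0 s k"
  have "saga_expected_lyap n \<tau> gradf G p L \<alpha> x0 J0 xs (Suc k)
      = (\<Sum>s\<in>PiE {..<k} (\<lambda>_. G). (\<Prod>j<k. p (s j))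
          * (\<Sum>C\<in>G. p C * lyap_mean \<alpha> (saga_step n gradf p \<alpha> (?it s) C)))"
    unfolding saga_expected_lyap_eq
    by (rule trans[OF sum_PiE_lessThan_Suc]) (simp only: saga_iter_fun_upd_Suc)
  also have "\<dots> \<le> (\<Sum>s\<in>PiE {..<k} (\<lambda>_. G). (\<Prod>j<k. p (s j)) * ((1 - \<mu> * \<alpha>) * lyap_mean \<alpha> (?it s)))"
  proof (intro sum_mono mult_left_mono sample_path_prob_nonneg)
    fix s
    show "(\<Sum>C\<in>G. p C * lyap_mean \<alpha> (saga_step n gradf p \<alpha> (?it s) C)) \<le> (1 - \<mu> * \<alpha>) * lyap_mean \<alpha> (?it s)"
      using lyap_mean_step_le[OF alpha_pos stepsize, of "fst (?it s)" "snd (?it s)"] by simp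
  qed
  also have "\<dots> = (1 - \<mu> * \<alpha>) * saga_expected_lyap n \<tau> gradf G p L \<alpha> x0 J0 xs k"
    unfolding saga_expected_lyap_eq by (simp add: sum_distrib_left mult.left_commute)
  finally show ?thesis .
qed

lemma contraction_factor_le_one:
  assumes "\<alpha> > 0" and stepsize: "\<And>C. C \<in> G \<Longrightarrow> \<alpha> * (\<mu> + 4 * L C * real \<tau> / real n) \<le> p C"
  shows "\<mu> * \<alpha> \<le> 1"
proof -
  obtain C where C: "C \<in> G" using G_nonempty by blast
  have "0 \<le> \<alpha> * (4 * L C * real \<tau> / real n)"
    using assms(1) L_pos[OF C] by simp
  then have "\<mu> * \<alpha> \<le> \<alpha> * (\<mu> + 4 * L C * real \<tau> / real n)"
    by (simp add: distrib_left mult.commute)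
  also have "\<dots> \<le> 1"
    using stepsize[OF C] p_le_one[OF C] by linarith
  finally show ?thesis .
qed

lemma saga_expected_lyap_le:
  assumes alpha_pos: "\<alpha> > 0"
    and stepsize: "\<And>C. C \<in> G \<Longrightarrow> \<alpha> * (\<mu> + 4 * L C * real \<tau> / real n) \<le> p C"
  shows "saga_expected_lyap n \<tau> gradf G p L \<alpha> x0 J0 xs k
    \<le> (1 - \<mu> * \<alpha>) ^ k * saga_expected_lyap n \<tau> gradf G p L \<alpha> x0 J0 xs 0"
proof (induction k)
  case (Suc k)
  have "0 \<le> 1 - \<mu> * \<alpha>"
    using contraction_factor_le_one[OF alpha_pos stepsize] by simp
  have "saga_expected_lyap n \<tau> gradf G p L \<alpha> x0 J0 xs (Suc k)
      \<le> (1 - \<mu> * \<alpha>) * saga_expected_lyap n \<tau> gradf G p L \<alpha> x0 J0 xs k"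
    by (rule saga_expected_lyap_Suc_le[OF alpha_pos stepsize])
  also have "\<dots> \<le> (1 - \<mu> * \<alpha>) * ((1 - \<mu> * \<alpha>) ^ k * saga_expected_lyap n \<tau> gradf G p L \<alpha> x0 J0 xs 0)"
    using Suc.IH \<open>0 \<le> 1 - \<mu> * \<alpha>\<close> by (rule mult_left_mono)
  finally show ?case
    by (simp add: mult.assoc)
qed simp

lemma stepsize_blockwise:
  assumes "\<alpha> \<le> Min ((\<lambda>C. p C / (\<mu> + 4 * L C * real \<tau> / real n)) ` G)" "C \<in> G"
  shows "\<alpha> * (\<mu> + 4 * L C * real \<tau> / real n) \<le> p C"
proof -
  have "Min ((\<lambda>C. p C / (\<mu> + 4 * L C * real \<tau> / real n)) ` G) \<le> p C / (\<mu> + 4 * L C * real \<tau> / real n)"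
    using finite_G assms(2) by (intro Min_le) auto
  with assms(1) have "\<alpha> \<le> p C / (\<mu> + 4 * L C * real \<tau> / real n)"
    by linarith
  moreover have "\<mu> + 4 * L C * real \<tau> / real n > 0"
    using mu_pos L_pos[OF assms(2)] by (simp add: add_pos_nonneg)
  ultimately show ?thesis
    by (simp add: pos_le_divide_eq)
qed

lemma iteration_bound_imp_ln_le:
  assumes "\<alpha> = Min ((\<lambda>C. p C / (\<mu> + 4 * L C * real \<tau> / real n)) ` G)"
    and "Max ((\<lambda>C. 1 / p C + 4 * L C / \<mu> * (real \<tau> / (real n * p C))) ` G) * ln (1 / \<epsilon>) \<le> real k"
  shows "ln (1 / \<epsilon>) \<le> \<mu> * \<alpha> * real k"
proof -
  define h where "h C = 1 / p C + 4 * L C / \<mu> * (real \<tau> / (real n * p C))" for C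
  obtain C where C: "C \<in> G" "\<alpha> = p C / (\<mu> + 4 * L C * real \<tau> / real n)"
    using Min_in[OF finite_imageI[OF finite_G]] G_nonempty assms(1) by auto
  have h_pos: "h C > 0"
    unfolding h_def using p_pos[OF C(1)] L_pos[OF C(1)] mu_pos by (simp add: add_pos_nonneg)
  have "h C = (\<mu> + 4 * L C * real \<tau> / real n) / (\<mu> * p C)"
    unfolding h_def using p_pos[OF C(1)] n_pos mu_pos by (simp add: field_simps)
  then have "\<mu> * \<alpha> = 1 / h C"
    unfolding C(2) by simp
  then have rate_nonneg: "0 \<le> \<mu> * \<alpha>"
    using h_pos by simp
  have "1 = \<mu> * \<alpha> * h C"
    using \<open>\<mu> * \<alpha> = 1 / h C\<close> h_pos by simp
  also have "\<dots> \<le> \<mu> * \<alpha> * Max (h ` G)"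
    using C(1) finite_G rate_nonneg by (intro mult_left_mono) auto
  finally have one_le: "1 \<le> \<mu> * \<alpha> * Max (h ` G)" .
  have M_bound: "Max (h ` G) * ln (1 / \<epsilon>) \<le> real k"
    using assms(2) unfolding h_def .
  show ?thesis
  proof (cases "ln (1 / \<epsilon>) \<le> 0")
    case True
    moreover have "0 \<le> \<mu> * \<alpha> * real k"
      using rate_nonneg by simp
    ultimately show ?thesis by linarith
  next
    case False
    then have "ln (1 / \<epsilon>) \<le> \<mu> * \<alpha> * Max (h ` G) * ln (1 / \<epsilon>)"
      using one_le by (simp add: mult_le_cancel_right1)
    also have "\<dots> = \<mu> * \<alpha> * (Max (h ` G) * ln (1 / \<epsilon>))"
      by simp
    also have "\<dots> \<le> \<mu> * \<alpha> * real k"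
      using M_bound rate_nonneg by (rule mult_left_mono)
    finally show ?thesis .
  qed
qed

end

theorem theorem5p2:
  fixes n \<tau> :: nat
    and f :: "nat \<Rightarrow> 'a::euclidean_space \<Rightarrow> real"
    and gradf :: "nat \<Rightarrow> 'a \<Rightarrow> 'a"
    and xs x0 :: 'a
    and J0 :: "nat \<Rightarrow> 'a"
    and G :: "nat set set"
    and p L :: "nat set \<Rightarrow> real"
    and \<mu> \<alpha> :: real
  assumes n_pos: "n > 0"
    and grad: "\<And>i x. i < n \<Longrightarrow> (f i has_derivative (\<lambda>h. gradf i x \<bullet> h)) (at x)"
    and minimizer: "\<And>x. (1 / real n) * (\<Sum>i<n. f i xs) \<le> (1 / real n) * (\<Sum>i<n. f i x)"
    and partition: "partition_on {..<n} G"
    and block_size: "\<And>C. C \<in> G \<Longrightarrow> card C = \<tau>"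
    and p_pos: "\<And>C. C \<in> G \<Longrightarrow> p C > 0"
    and p_sum: "(\<Sum>C\<in>G. p C) = 1"
    and mu_pos: "\<mu> > 0"
    and smooth: "\<And>C. C \<in> G \<Longrightarrow> smooth_with_grad (gradC gradf C) (L C)"
    and strconv: "\<And>C. C \<in> G \<Longrightarrow> strongly_convex_with_grad (fC f C) (gradC gradf C) \<mu>"
    and alpha_pos: "\<alpha> > 0"
    and alpha_le: "\<alpha> \<le> Min ((\<lambda>C. p C / (\<mu> + 4 * L C * real \<tau> / real n)) ` G)"
  shows "(\<forall>k. saga_expected_lyap n \<tau> gradf G p L \<alpha> x0 J0 xs k
              \<le> (1 - \<mu> * \<alpha>) ^ k * saga_expected_lyap n \<tau> gradf G p L \<alpha> x0 J0 xs 0)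
       \<and> (\<alpha> = Min ((\<lambda>C. p C / (\<mu> + 4 * L C * real \<tau> / real n)) ` G) \<longrightarrow>
           (\<forall>k \<epsilon>. \<epsilon> > 0 \<longrightarrow>
              real k \<ge> Max ((\<lambda>C. 1 / p C + 4 * L C / \<mu> * (real \<tau> / (real n * p C))) ` G)
                         * ln (1 / \<epsilon>) \<longrightarrow>
              saga_expected_lyap n \<tau> gradf G p L \<alpha> x0 J0 xs k
                \<le> \<epsilon> * saga_expected_lyap n \<tau> gradf G p L \<alpha> x0 J0 xs 0))"
proof -
  interpret minibatch_saga n \<tau> f gradf xs G p L \<mu>
    by unfold_locales (fact n_pos grad minimizer partition block_size p_pos p_sum mu_pos smooth strconv)+
  have stepsize: "\<And>C. C \<in> G \<Longrightarrow> \<alpha> * (\<mu> + 4 * L C * real \<tau> / real n) \<le> p C"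
    using alpha_le by (rule stepsize_blockwise)
  have rate: "saga_expected_lyap n \<tau> gradf G p L \<alpha> x0 J0 xs k
      \<le> (1 - \<mu> * \<alpha>) ^ k * saga_expected_lyap n \<tau> gradf G p L \<alpha> x0 J0 xs 0" for k
    using alpha_pos stepsize by (rule saga_expected_lyap_le)
  show ?thesis
  proof (intro conjI allI impI rate)
    fix k \<epsilon>
    assume alpha_eq: "\<alpha> = Min ((\<lambda>C. p C / (\<mu> + 4 * L C * real \<tau> / real n)) ` G)"
      and eps_pos: "\<epsilon> > 0"
      and k_ge: "real k \<ge> Max ((\<lambda>C. 1 / p C + 4 * L C / \<mu> * (real \<tau> / (real n * p C))) ` G)
                   * ln (1 / \<epsilon>)"
    have "(1 - \<mu> * \<alpha>) ^ k \<le> \<epsilon>"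
      by (rule power_one_minus_le_of_ln[OF contraction_factor_le_one[OF alpha_pos stepsize] eps_pos
            iteration_bound_imp_ln_le[OF alpha_eq k_ge]])
    then show "saga_expected_lyap n \<tau> gradf G p L \<alpha> x0 J0 xs k
        \<le> \<epsilon> * saga_expected_lyap n \<tau> gradf G p L \<alpha> x0 J0 xs 0"
      using rate[of k] saga_expected_lyap_nonneg[of \<alpha> x0 J0 0] alpha_pos
      by (meson less_imp_le mult_right_mono order.trans)
  qed
qed

end
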